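(* For $n\ge 6$, the family $$\mathcal{B}=\{\sigma\in S_n:\sigma(1)=1,\ \sigma(2)=2,\ \#\{i\ge5:\sigma(i)=i\}\neq1\}\cup\{(1\,3)(2\,4),(1\,4)(2\,3),(1\,3\,2\,4),(1\,4\,2\,3)\}$$ has no singleton intersection, is not contained in any $2$-coset of $S_n$, and satisfies $$|\mathcal{B}|=(n-2)!-(n-4)(d_{n-3}+2d_{n-4}+d_{n-5})+4=(1-1/e+o(1))(n-2)!.$$
   Context: $d_m$ denotes the number of derangements of an $m$-element set. A family $\mathcal{A}\subset S_n$ has no singleton intersection if there are no $\sigma,\tau\in\mathcal{A}$ with $\#\{i:\sigma(i)=\tau(i)\}=1$. A $2$-coset of $S_n$ is a set $\{\sigma:\sigma(i)=j,\sigma(k)=l\}$ with $i\ne k$, $j\ne l$. *)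

theory Defs
  imports "HOL-Analysis.Analysis" "HOL-Combinatorics.Permutations"
begin

definition Sym :: "nat \<Rightarrow> (nat \<Rightarrow> nat) set" where
  "Sym n = {\<sigma>. \<sigma> permutes {1..n}}"

definition derangements_num :: "nat \<Rightarrow> nat" where
  "derangements_num m = card {\<sigma>. \<sigma> permutes {1..m} \<and> (\<forall>i\<in>{1..m}. \<sigma> i \<noteq> i)}"

definition agree_count :: "nat \<Rightarrow> (nat \<Rightarrow> nat) \<Rightarrow> (nat \<Rightarrow> nat) \<Rightarrow> nat" where
  "agree_count n \<sigma> \<tau> = card {i\<in>{1..n}. \<sigma> i = \<tau> i}"

definition no_singleton_intersection :: "nat \<Rightarrow> (nat \<Rightarrow> nat) set \<Rightarrow> bool" where
  "no_singleton_intersection n A \<longleftrightarrow> (\<forall>\<sigma>\<in>A. \<forall>\<tau>\<in>A. agree_count n \<sigma> \<tau> \<noteq> 1)"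

definition two_coset :: "nat \<Rightarrow> nat \<Rightarrow> nat \<Rightarrow> nat \<Rightarrow> nat \<Rightarrow> (nat \<Rightarrow> nat) set" where
  "two_coset n i j k l = {\<sigma>\<in>Sym n. \<sigma> i = j \<and> \<sigma> k = l}"

definition is_two_coset :: "nat \<Rightarrow> (nat \<Rightarrow> nat) set \<Rightarrow> bool" where
  "is_two_coset n C \<longleftrightarrow> (\<exists>i\<in>{1..n}. \<exists>j\<in>{1..n}. \<exists>k\<in>{1..n}. \<exists>l\<in>{1..n}.
      i \<noteq> k \<and> j \<noteq> l \<and> C = two_coset n i j k l)"

definition p1324 :: "nat \<Rightarrow> nat" where
  "p1324 i = (if i = 1 then 3 else if i = 3 then 1 else if i = 2 then 4 else if i = 4 then 2 else i)"
definition p1423 :: "nat \<Rightarrow> nat" where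
  "p1423 i = (if i = 1 then 4 else if i = 4 then 1 else if i = 2 then 3 else if i = 3 then 2 else i)"
definition c1324 :: "nat \<Rightarrow> nat" where
  "c1324 i = (if i = 1 then 3 else if i = 3 then 2 else if i = 2 then 4 else if i = 4 then 1 else i)"
definition c1423 :: "nat \<Rightarrow> nat" where
  "c1423 i = (if i = 1 then 4 else if i = 4 then 2 else if i = 2 then 3 else if i = 3 then 1 else i)"

definition familyB :: "nat \<Rightarrow> (nat \<Rightarrow> nat) set" where
  "familyB n = {\<sigma>\<in>Sym n. \<sigma> 1 = 1 \<and> \<sigma> 2 = 2 \<and> card {i\<in>{5..n}. \<sigma> i = i} \<noteq> 1}
               \<union> {p1324, p1423, c1324, c1423}"

end

theory Submission
  imports Defs "HOL-Real_Asymp.Real_Asymp"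
begin

text \<open>
  Every member of \<open>\<B>\<close> fixing 1 and 2 maps \<open>{3,4}\<close> onto itself, while each of the four
  exceptional permutations maps \<open>{1,2}\<close> onto \<open>{3,4}\<close> and fixes every \<open>i \<ge> 5\<close>. Hence two
  members fixing 1 and 2 agree at 1 and 2, two exceptional ones agree at 5 and 6, and a
  member of each kind agree exactly at the fixed points of the former in \<open>{5..n}\<close>, of which
  there are not exactly one. The identity and \<open>(1 3)(2 4)\<close> force a 2-coset containing \<open>\<B>\<close>
  to fix two points \<open>\<ge> 5\<close>, which some member of \<open>\<B>\<close> moves.

  For the count, the permutations of \<open>{3..n}\<close> with a unique fixed point \<open>i\<close> in \<open>{5..n}\<close>
  are, for each of the \<open>n - 4\<close> choices of \<open>i\<close>, the permutations of an \<open>(n-3)\<close>-set without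
  fixed points in a given \<open>(n-5)\<close>-subset. Removing the constraint point by point
  (inclusion-exclusion) shows that there are \<open>d\<^sub>n\<^sub>-\<^sub>3 + 2d\<^sub>n\<^sub>-\<^sub>4 + d\<^sub>n\<^sub>-\<^sub>5\<close> of them, and the
  asymptotics follow from \<open>d\<^sub>m / m! \<longrightarrow> 1/e\<close>.
\<close>

definition derangements_on :: "'a set \<Rightarrow> 'a set \<Rightarrow> ('a \<Rightarrow> 'a) set" where
  "derangements_on S T = {\<sigma>. \<sigma> permutes S \<and> (\<forall>i\<in>T. \<sigma> i \<noteq> i)}"

text \<open>The number of permutations of an \<open>s\<close>-set without fixed points in a given \<open>k\<close>-subset.\<close>
fun partial_derangement_num :: "nat \<Rightarrow> nat \<Rightarrow> int" where
  "partial_derangement_num s 0 = fact s"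
| "partial_derangement_num s (Suc k) =
     partial_derangement_num s k - partial_derangement_num (s - 1) k"

lemma permutes_Diff_singleton_iff:
  assumes "t \<in> S"
  shows "\<sigma> permutes (S - {t}) \<longleftrightarrow> \<sigma> permutes S \<and> \<sigma> t = t"
proof
  assume "\<sigma> permutes (S - {t})"
  then show "\<sigma> permutes S \<and> \<sigma> t = t"
    by (auto intro: permutes_subset simp: permutes_not_in)
next
  assume "\<sigma> permutes S \<and> \<sigma> t = t"
  then show "\<sigma> permutes (S - {t})"
    using permutes_superset[of \<sigma> S "S - {t}"] by auto
qed

lemma finite_derangements_on: "finite S \<Longrightarrow> finite (derangements_on S T)"
  unfolding derangements_on_def
  by (rule rev_finite_subset[OF finite_permutations]) auto

lemma card_derangements_on:
  assumes "finite S" "T \<subseteq> S"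
  shows "int (card (derangements_on S T)) = partial_derangement_num (card S) (card T)"
proof -
  have "finite T" using assms finite_subset by blast
  then show ?thesis
    using assms
  proof (induction T arbitrary: S rule: finite_induct)
    case empty
    then show ?case by (simp add: derangements_on_def card_permutations)
  next
    case (insert t T)
    have tS: "t \<in> S" using insert.prems by blast
    have fix_t: "derangements_on (S - {t}) T \<subseteq> derangements_on S T"
      unfolding derangements_on_def by (auto intro: permutes_subset)
    \<comment> \<open>The permutations moving \<open>t\<close> are all minus those fixing it, i.e. those of \<open>S - {t}\<close>.\<close>
    have split: "derangements_on S (insert t T) = derangements_on S T - derangements_on (S - {t}) T"
      unfolding derangements_on_def permutes_Diff_singleton_iff[OF tS] by auto
    have "int (card (derangements_on S (insert t T))) =
        int (card (derangements_on S T)) - int (card (derangements_on (S - {t}) T))"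
      unfolding split using finite_derangements_on[OF insert.prems(1)] fix_t
      by (simp add: card_Diff_subset card_mono finite_subset of_nat_diff)
    also have "\<dots> = partial_derangement_num (card S) (card T)
        - partial_derangement_num (card S - 1) (card T)"
      using insert.IH[of S] insert.IH[of "S - {t}"] insert.prems insert.hyps tS
      by (auto simp: card_Diff_singleton)
    finally show ?case using insert.hyps by simp
  qed
qed

lemma partial_derangement_num_eq:
  "partial_derangement_num s k = (\<Sum>j\<le>k. (-1)^j * of_nat (k choose j) * fact (s - j))"
proof (induction k arbitrary: s)
  case 0
  then show ?case by simp
next
  case (Suc k)
  define h where "h j = (-1::int)^j * of_nat (k choose j) * fact (s - j)" for j
  define q where "q j = (-1::int)^j * of_nat (k choose j) * fact (s - 1 - j)" for j
  define r where "r j = (-1::int)^j * of_nat (Suc k choose j) * fact (s - j)" for j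
  have h_shift: "(\<Sum>j\<le>k. h j) = h 0 + (\<Sum>j\<le>k. h (Suc j))"
  proof -
    have "(\<Sum>j\<le>k. h j) = (\<Sum>j\<le>Suc k. h j)" by (simp add: h_def)
    also have "\<dots> = h 0 + (\<Sum>j\<le>k. h (Suc j))" by (rule sum.atMost_Suc_shift)
    finally show ?thesis .
  qed
  \<comment> \<open>Pascal's rule splits each term of the new sum into a term of each old one.\<close>
  have r_Suc: "r (Suc j) = h (Suc j) - q j" for j
    unfolding r_def h_def q_def by (simp add: algebra_simps)
  have "(\<Sum>j\<le>Suc k. r j) = r 0 + (\<Sum>j\<le>k. r (Suc j))"
    by (rule sum.atMost_Suc_shift)
  also have "\<dots> = (\<Sum>j\<le>k. h j) - (\<Sum>j\<le>k. q j)"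
    unfolding r_Suc sum_subtractf h_shift by (simp add: r_def h_def)
  also have "\<dots> = partial_derangement_num s k - partial_derangement_num (s - 1) k"
    unfolding Suc.IH[of s] Suc.IH[of "s - 1"] h_def q_def ..
  finally show ?case unfolding r_def by simp
qed

lemma int_derangements_num: "int (derangements_num m) = partial_derangement_num m m"
proof -
  have "derangements_num m = card (derangements_on {1..m} {1..m})"
    unfolding derangements_num_def derangements_on_def by simp
  then show ?thesis using card_derangements_on[of "{1..m}" "{1..m}"] by simp
qed

definition derangement_ratio :: "nat \<Rightarrow> real" where
  "derangement_ratio m = real (derangements_num m) / fact m"

lemma derangement_ratio_eq: "derangement_ratio m = (\<Sum>j\<le>m. (-1)^j / fact j)"
proof -
  have "real (derangements_num m) = real_of_int (partial_derangement_num m m)"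
    by (metis int_derangements_num of_int_of_nat_eq)
  also have "\<dots> = (\<Sum>j\<le>m. (-1)^j * (real (m choose j) * fact (m - j)))"
    unfolding partial_derangement_num_eq by (simp add: mult.assoc)
  also have "\<dots> = fact m * (\<Sum>j\<le>m. (-1)^j / fact j)"
    unfolding sum_distrib_left by (intro sum.cong refl) (simp add: binomial_fact)
  finally show ?thesis by (simp add: derangement_ratio_def)
qed

lemma derangement_ratio_tendsto: "derangement_ratio \<longlonglongrightarrow> exp (-1)"
proof -
  have "(\<lambda>n. \<Sum>i<Suc n. (-1::real)^i /\<^sub>R fact i) \<longlonglongrightarrow> exp (-1)"
    using exp_converges[of "-1::real"] unfolding sums_def by (rule LIMSEQ_Suc)
  then show ?thesis
    unfolding derangement_ratio_eq[abs_def] lessThan_Suc_atMost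
    by (simp add: divide_inverse mult.commute)
qed

lemma partial_derangement_num_add_two:
  "partial_derangement_num (k + 2) k =
     int (derangements_num (k + 2) + 2 * derangements_num (k + 1) + derangements_num k)"
  by (simp add: int_derangements_num)

lemma card_permutes_unique_fixed_point:
  assumes "finite S" "T \<subseteq> S"
  shows "int (card {\<sigma>. \<sigma> permutes S \<and> card {i\<in>T. \<sigma> i = i} = 1}) =
           int (card T) * partial_derangement_num (card S - 1) (card T - 1)"
proof -
  define E where "E i = derangements_on (S - {i}) (T - {i})" for i
  have unique_fixed: "{\<sigma>. \<sigma> permutes S \<and> card {i\<in>T. \<sigma> i = i} = 1} = (\<Union>i\<in>T. E i)"
  proof (intro equalityI subsetI)
    fix \<sigma> assume "\<sigma> \<in> {\<sigma>. \<sigma> permutes S \<and> card {i\<in>T. \<sigma> i = i} = 1}"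
    then obtain i where "\<sigma> permutes S" "{x\<in>T. \<sigma> x = x} = {i}"
      by (auto simp: card_1_singleton_iff)
    then have "i \<in> T" "i \<in> S" "\<sigma> permutes S - {i}" "\<forall>j\<in>T - {i}. \<sigma> j \<noteq> j"
      using assms(2) permutes_Diff_singleton_iff[of i S \<sigma>] by auto
    then show "\<sigma> \<in> (\<Union>i\<in>T. E i)"
      unfolding E_def derangements_on_def by blast
  next
    fix \<sigma> assume "\<sigma> \<in> (\<Union>i\<in>T. E i)"
    then obtain i where i: "i \<in> T" "\<sigma> \<in> E i" by blast
    then have "\<sigma> permutes S" "{x\<in>T. \<sigma> x = x} = {i}"
      using assms(2) by (auto simp: E_def derangements_on_def permutes_Diff_singleton_iff)
    then show "\<sigma> \<in> {\<sigma>. \<sigma> permutes S \<and> card {i\<in>T. \<sigma> i = i} = 1}" by simp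
  qed
  have disjoint: "E i \<inter> E j = {}" if "i \<in> T" "j \<in> T" "i \<noteq> j" for i j
    using that assms(2)
    by (auto simp: E_def derangements_on_def permutes_Diff_singleton_iff)
  have "finite (E i)" for i
    using assms(1) by (simp add: E_def finite_derangements_on)
  then have "card (\<Union>i\<in>T. E i) = (\<Sum>i\<in>T. card (E i))"
    using finite_subset[OF assms(2,1)] disjoint by (intro card_UN_disjoint) auto
  moreover have "int (card (E i)) = partial_derangement_num (card S - 1) (card T - 1)"
    if "i \<in> T" for i
    using that assms card_derangements_on[of "S - {i}" "T - {i}"] finite_subset[of T S]
    by (auto simp: E_def card_Diff_singleton subsetD)
  ultimately show ?thesis
    unfolding unique_fixed by simp
qed

lemma Sym_fixing_1_2_iff:
  assumes "n \<ge> 2"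
  shows "\<sigma> \<in> Sym n \<and> \<sigma> 1 = 1 \<and> \<sigma> 2 = 2 \<longleftrightarrow> \<sigma> permutes {3..n}"
proof -
  have "{1..n} - {1} - {2} = {3..n}" by auto
  then show ?thesis
    using assms permutes_Diff_singleton_iff[of 1 "{1..n}" \<sigma>]
      permutes_Diff_singleton_iff[of 2 "{1..n} - {1}" \<sigma>]
    unfolding Sym_def by auto
qed

definition familyB_stab :: "nat \<Rightarrow> (nat \<Rightarrow> nat) set" where
  "familyB_stab n = {\<sigma>\<in>Sym n. \<sigma> 1 = 1 \<and> \<sigma> 2 = 2 \<and> card {i\<in>{5..n}. \<sigma> i = i} \<noteq> 1}"

definition familyB_swaps :: "(nat \<Rightarrow> nat) set" where
  "familyB_swaps = {p1324, p1423, c1324, c1423}"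

lemma familyB_eq: "familyB n = familyB_stab n \<union> familyB_swaps"
  unfolding familyB_def familyB_stab_def familyB_swaps_def ..

lemma card_familyB_stab:
  assumes "n \<ge> 5"
  shows "int (card (familyB_stab n)) =
           fact (n - 2) - int (n - 4) * partial_derangement_num (n - 3) (n - 5)"
proof -
  define P where "P = {\<sigma>. \<sigma> permutes {3..n}}"
  define U where "U = {\<sigma>. \<sigma> permutes {3..n} \<and> card {i\<in>{5..n}. \<sigma> i = i} = 1}"
  have "\<sigma> \<in> familyB_stab n \<longleftrightarrow> \<sigma> \<in> P - U" for \<sigma>
    using Sym_fixing_1_2_iff[of n \<sigma>] assms unfolding familyB_stab_def P_def U_def by auto
  then have "familyB_stab n = P - U" by blast
  moreover have "finite P" "U \<subseteq> P"
    unfolding P_def U_def by (auto simp: finite_permutations)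
  then have "card (P - U) = card P - card U" "card U \<le> card P"
    by (simp_all add: card_Diff_subset card_mono finite_subset)
  moreover have "card P = fact (n - 2)"
    unfolding P_def by (simp add: card_permutations)
  moreover have "int (card U) = int (n - 4) * partial_derangement_num (n - 3) (n - 5)"
    using card_permutes_unique_fixed_point[of "{3..n}" "{5..n}"] assms
    unfolding U_def by (simp add: numeral_eq_Suc)
  ultimately show ?thesis
    by (simp add: of_nat_diff)
qed

lemma familyB_swaps_values:
  assumes "p \<in> familyB_swaps"
  shows "p 1 \<in> {3,4}" "p 2 \<in> {3,4}" "p 3 \<in> {1,2}" "p 4 \<in> {1,2}" "i \<ge> 5 \<Longrightarrow> p i = i"
  using assms
  by (auto simp: familyB_swaps_def p1324_def p1423_def c1324_def c1423_def)

lemma card_familyB_swaps: "card familyB_swaps = 4"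
proof -
  have differ: "f \<noteq> g" if "f x \<noteq> g x" for f g :: "nat \<Rightarrow> nat" and x
    using that by auto
  have "p1324 \<noteq> p1423" "p1324 \<noteq> c1324" "p1324 \<noteq> c1423"
       "p1423 \<noteq> c1324" "p1423 \<noteq> c1423" "c1324 \<noteq> c1423"
    by (rule differ[where x = 1] differ[where x = 3];
        simp add: p1324_def p1423_def c1324_def c1423_def)+
  then show ?thesis by (simp add: familyB_swaps_def)
qed

lemma agree_count_commute: "agree_count n \<sigma> \<tau> = agree_count n \<tau> \<sigma>"
  unfolding agree_count_def by (metis (no_types, lifting))

lemma agree_count_neq_1_if_agree_twice:
  assumes "a \<in> {1..n}" "b \<in> {1..n}" "a \<noteq> b" "\<sigma> a = \<tau> a" "\<sigma> b = \<tau> b"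
  shows "agree_count n \<sigma> \<tau> \<noteq> 1"
proof -
  have "card {a, b} \<le> card {i\<in>{1..n}. \<sigma> i = \<tau> i}"
    using assms by (intro card_mono) auto
  then show ?thesis unfolding agree_count_def using assms(3) by simp
qed

lemma agree_count_familyB_stab_swaps:
  assumes "\<sigma> \<in> familyB_stab n" "p \<in> familyB_swaps"
  shows "agree_count n \<sigma> p \<noteq> 1"
proof -
  have \<sigma>: "\<sigma> permutes {1..n}" "\<sigma> 1 = 1" "\<sigma> 2 = 2" "card {i\<in>{5..n}. \<sigma> i = i} \<noteq> 1"
    using assms(1) unfolding familyB_stab_def Sym_def by auto
  have \<sigma>_34: "\<sigma> 3 \<noteq> \<sigma> 1" "\<sigma> 3 \<noteq> \<sigma> 2" "\<sigma> 4 \<noteq> \<sigma> 1" "\<sigma> 4 \<noteq> \<sigma> 2"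
    using permutes_inj[OF \<sigma>(1)] by (simp_all add: inj_eq)
  have low: "\<sigma> i \<noteq> p i" if "i \<in> {1..4}" for i
  proof -
    have "i = 1 \<or> i = 2 \<or> i = 3 \<or> i = 4" using that by auto
    then show ?thesis using familyB_swaps_values(1-4)[OF assms(2)] \<sigma> \<sigma>_34 by auto
  qed
  have "x \<in> {1..n} \<and> \<sigma> x = p x \<longleftrightarrow> x \<in> {5..n} \<and> \<sigma> x = x" for x
  proof (cases "x \<le> 4")
    case True
    then show ?thesis using low[of x] by auto
  next
    case False
    then show ?thesis using familyB_swaps_values(5)[OF assms(2), of x] by auto
  qed
  then have "{i\<in>{1..n}. \<sigma> i = p i} = {i\<in>{5..n}. \<sigma> i = i}" by blast
  then show ?thesis
    unfolding agree_count_def using \<open>card {i\<in>{5..n}. \<sigma> i = i} \<noteq> 1\<close> by simp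
qed

lemma no_singleton_intersection_familyB:
  assumes "n \<ge> 6"
  shows "no_singleton_intersection n (familyB n)"
  unfolding no_singleton_intersection_def familyB_eq
proof (intro ballI)
  fix \<sigma> \<tau> assume "\<sigma> \<in> familyB_stab n \<union> familyB_swaps" "\<tau> \<in> familyB_stab n \<union> familyB_swaps"
  then show "agree_count n \<sigma> \<tau> \<noteq> 1"
  proof (elim UnE)
    assume "\<sigma> \<in> familyB_stab n" "\<tau> \<in> familyB_stab n"
    then show ?thesis
      using assms by (intro agree_count_neq_1_if_agree_twice[of 1 n 2]) (auto simp: familyB_stab_def)
  next
    assume "\<sigma> \<in> familyB_swaps" "\<tau> \<in> familyB_swaps"
    then show ?thesis
      using assms by (intro agree_count_neq_1_if_agree_twice[of 5 n 6]) (auto simp: familyB_swaps_values)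
  qed (use agree_count_familyB_stab_swaps agree_count_commute in metis)+
qed

lemma card_familyB:
  assumes "n \<ge> 6"
  shows "int (card (familyB n)) =
           int (fact (n - 2))
           - int (n - 4) * int (derangements_num (n - 3) + 2 * derangements_num (n - 4)
                                 + derangements_num (n - 5)) + 4"
proof -
  have "finite (familyB_stab n)"
    unfolding familyB_stab_def Sym_def
    by (rule rev_finite_subset[OF finite_permutations[of "{1..n}"]]) auto
  moreover have "finite familyB_swaps" by (simp add: familyB_swaps_def)
  moreover have "familyB_stab n \<inter> familyB_swaps = {}"
    using familyB_swaps_values(1) by (fastforce simp: familyB_stab_def)
  ultimately have "card (familyB n) = card (familyB_stab n) + 4"
    unfolding familyB_eq by (simp add: card_Un_disjoint card_familyB_swaps)
  moreover have "partial_derangement_num (n - 3) (n - 5) =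
      int (derangements_num (n - 3) + 2 * derangements_num (n - 4) + derangements_num (n - 5))"
    using partial_derangement_num_add_two[of "n - 5"] assms
    by (simp add: numeral_eq_Suc Suc_diff_Suc)
  ultimately show ?thesis
    using card_familyB_stab[of n] assms by simp
qed

lemma familyB_stab_moves:
  assumes "n \<ge> 6" "i \<in> {5..n}" "k \<in> {5..n}" "i \<noteq> k"
  shows "\<exists>\<sigma>\<in>familyB_stab n. \<sigma> i \<noteq> i"
proof -
  obtain j where j: "j \<in> {3..n}" "j \<noteq> i"
    and fixed: "card {x\<in>{5..n}. Transposition.transpose i j x = x} \<noteq> 1"
  proof (cases "n = 6")
    case True
    then have "{5..n} = {i, k}" using assms by auto
    then have "{x\<in>{5..n}. Transposition.transpose i k x = x} = {}"
      using assms(4) by auto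
    then have "card {x\<in>{5..n}. Transposition.transpose i k x = x} \<noteq> 1"
      by (metis card.empty zero_neq_one)
    moreover have "k \<in> {3..n}" "k \<noteq> i"
      using assms(3,4) by auto
    ultimately show ?thesis using that by blast
  next
    case False
    have "{x\<in>{5..n}. Transposition.transpose i 3 x = x} = {5..n} - {i}"
      by (auto simp: Transposition.transpose_def)
    moreover have "card ({5..n} - {i}) = n - 5"
      using assms(2) by simp
    ultimately show ?thesis using that[of 3] assms False by simp
  qed
  have "Transposition.transpose i j permutes {1..n}"
    using assms(2) j(1) by (intro permutes_swap_id) auto
  moreover have "Transposition.transpose i j 1 = 1" "Transposition.transpose i j 2 = 2"
    using assms(2) j(1) by (auto simp: Transposition.transpose_def)
  ultimately have "Transposition.transpose i j \<in> familyB_stab n"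
    using fixed by (simp add: familyB_stab_def Sym_def)
  moreover have "Transposition.transpose i j i \<noteq> i"
    using j(2) by simp
  ultimately show ?thesis by blast
qed

lemma familyB_not_in_two_coset:
  assumes "n \<ge> 6"
  shows "\<not> (\<exists>C. is_two_coset n C \<and> familyB n \<subseteq> C)"
proof
  assume "\<exists>C. is_two_coset n C \<and> familyB n \<subseteq> C"
  then obtain i j k l where ik: "i \<in> {1..n}" "k \<in> {1..n}" "i \<noteq> k"
    and mem: "\<And>\<sigma>. \<sigma> \<in> familyB n \<Longrightarrow> \<sigma> i = j \<and> \<sigma> k = l"
    unfolding is_two_coset_def two_coset_def by blast
  have "{x\<in>{5..n}. id x = x} = {5..n}" by auto
  then have "id \<in> familyB_stab n"
    using assms by (simp add: familyB_stab_def Sym_def)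
  then have fixed: "\<sigma> i = i \<and> \<sigma> k = k" if "\<sigma> \<in> familyB n" for \<sigma>
    using mem[OF that] mem[of id] unfolding familyB_eq by auto
  then have "p1324 i = i" "p1324 k = k"
    unfolding familyB_eq familyB_swaps_def by auto
  then have "i \<ge> 5" "k \<ge> 5"
    using ik(1,2) by (auto simp: p1324_def split: if_splits)
  then obtain \<sigma> where "\<sigma> \<in> familyB_stab n" "\<sigma> i \<noteq> i"
    using familyB_stab_moves[of n i k] assms ik by auto
  then show False using fixed unfolding familyB_eq by blast
qed

lemma familyB_over_fact:
  fixes m :: nat
  shows "real (card (familyB (m + 6))) / fact (m + 4) =
           1 - (real m + 2) / (real m + 4) * derangement_ratio (m + 3)
             - 2 * (real m + 2) / ((real m + 4) * (real m + 3)) * derangement_ratio (m + 2)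
             - 1 / ((real m + 4) * (real m + 3)) * derangement_ratio (m + 1) + 4 / fact (m + 4)"
proof -
  have field_identity:
    "(c * b * a * F - a * (D3 + 2 * D2 + D1) + 4) / (c * b * a * F) =
       1 - a / c * (D3 / (b * a * F)) - 2 * a / (c * b) * (D2 / (a * F))
         - 1 / (c * b) * (D1 / F) + 4 / (c * b * a * F)"
    if "a > 0" "b > 0" "c > 0" "F > 0" for a b c F D1 D2 D3 :: real
    using that by (simp add: field_simps)
  have "int (card (familyB (m + 6))) = int (fact (m + 4)) - int (m + 2) *
     int (derangements_num (m + 3) + 2 * derangements_num (m + 2) + derangements_num (m + 1)) + 4"
    using card_familyB[of "m + 6"] by (simp add: add.commute)
  then have card: "real (card (familyB (m + 6))) = fact (m + 4) - (real m + 2) *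
     (real (derangements_num (m + 3)) + 2 * real (derangements_num (m + 2))
      + real (derangements_num (m + 1))) + 4"
    by (metis (mono_tags) of_int_of_nat_eq of_int_add of_int_diff of_int_mult of_nat_add
        of_nat_fact of_nat_mult of_nat_numeral)
  have fact_expand:
    "(fact (m + 4) :: real) = (real m + 4) * (real m + 3) * (real m + 2) * fact (m + 1)"
    "(fact (m + 3) :: real) = (real m + 3) * (real m + 2) * fact (m + 1)"
    "(fact (m + 2) :: real) = (real m + 2) * fact (m + 1)"
    by (simp_all add: numeral_eq_Suc algebra_simps)
  show ?thesis
    unfolding card derangement_ratio_def fact_expand by (rule field_identity) simp_all
qed

lemma familyB_over_fact_tendsto:
  "(\<lambda>n. real (card (familyB n)) / fact (n - 2)) \<longlonglongrightarrow> 1 - exp (-1)"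
proof (rule LIMSEQ_offset[where k = 6])
  have ratio: "(\<lambda>m. derangement_ratio (m + j)) \<longlonglongrightarrow> exp (-1)" for j
    by (rule LIMSEQ_ignore_initial_segment[OF derangement_ratio_tendsto])
  have "(\<lambda>n. inverse (fact n) * 1 ^ n :: real) \<longlonglongrightarrow> 0"
    by (rule summable_LIMSEQ_zero[OF summable_exp])
  then have "(\<lambda>m. 4 / fact (m + 4) :: real) \<longlonglongrightarrow> 4 * 0"
    by (intro tendsto_mult_left LIMSEQ_ignore_initial_segment) (simp add: divide_inverse)
  moreover have "(\<lambda>m::nat. (real m + 2) / (real m + 4)) \<longlonglongrightarrow> 1"
    "(\<lambda>m::nat. 2 * (real m + 2) / ((real m + 4) * (real m + 3))) \<longlonglongrightarrow> 0"
    "(\<lambda>m::nat. 1 / ((real m + 4) * (real m + 3))) \<longlonglongrightarrow> 0"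
    by real_asymp+
  ultimately have "(\<lambda>m. real (card (familyB (m + 6))) / fact (m + 4))
      \<longlonglongrightarrow> 1 - 1 * exp (-1) - 0 * exp (-1) - 0 * exp (-1) + 4 * 0"
    unfolding familyB_over_fact by (intro tendsto_intros ratio)
  then show "(\<lambda>m. real (card (familyB (m + 6))) / fact (m + 6 - 2)) \<longlonglongrightarrow> 1 - exp (-1)"
    by (simp add: add.commute)
qed

theorem mainTheorem14:
  shows "(\<forall>n\<ge>6.
            no_singleton_intersection n (familyB n) \<and>
            \<not> (\<exists>C. is_two_coset n C \<and> familyB n \<subseteq> C) \<and>
            int (card (familyB n)) =
              int (fact (n - 2))
              - int (n - 4) * int (derangements_num (n - 3) + 2 * derangements_num (n - 4)
                                    + derangements_num (n - 5)) + 4)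
         \<and> ((\<lambda>n. real (card (familyB n)) / fact (n - 2)) \<longlonglongrightarrow> 1 - exp (-1))"
  using no_singleton_intersection_familyB familyB_not_in_two_coset card_familyB
    familyB_over_fact_tendsto by blast

end
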